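(* Let $X$ be a countable set and let $w$ be an essentially locally finite weight on $X$ such that $(X,\delta_w)$ is complete. Then for all $x,y\in X$ there exists a $w$-geodesic from $x$ to $y$.
   Context: A weight on $X$ is a symmetric function $w:X\times X\to[0,\infty]$ with $w(x,y)=0$ iff $x=y$; it is essentially locally finite if $\#\{y\in X\mid w(x,y)<R\}<\infty$ for all $x\in X$, $R>0$. A path from $x$ to $y$ is a finite sequence $(x_0,\dots,x_n)$ of pairwise distinct elements of $X$ with $x_0=x$, $x_n=y$; its $w$-length is $l_w=\sum_{i=1}^n w(x_{i-1},x_i)$, and $\delta_w(x,y)$ is the infimum of $l_w$ over all paths from $x$ to $y$ (a pseudo metric, possibly taking the value $\infty$). A $w$-geodesic from $x$ to $y$ is a path $\gamma$ from $x$ to $y$ with $l_w(\gamma)=\delta_w(x,y)$. *)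

theory Defs
  imports "HOL-Library.Extended_Nonnegative_Real" "HOL-Library.Countable_Set"
begin

definition weight_on :: "'a set \<Rightarrow> ('a \<Rightarrow> 'a \<Rightarrow> ennreal) \<Rightarrow> bool" where
  "weight_on X w \<longleftrightarrow> (\<forall>x\<in>X. \<forall>y\<in>X. w x y = w y x) \<and> (\<forall>x\<in>X. \<forall>y\<in>X. w x y = 0 \<longleftrightarrow> x = y)"

definition ess_locally_finite :: "'a set \<Rightarrow> ('a \<Rightarrow> 'a \<Rightarrow> ennreal) \<Rightarrow> bool" where
  "ess_locally_finite X w \<longleftrightarrow> (\<forall>x\<in>X. \<forall>R::real. R > 0 \<longrightarrow> finite {y\<in>X. w x y < ennreal R})"

definition is_path :: "'a set \<Rightarrow> 'a \<Rightarrow> 'a \<Rightarrow> 'a list \<Rightarrow> bool" where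
  "is_path X x y p \<longleftrightarrow> p \<noteq> [] \<and> distinct p \<and> set p \<subseteq> X \<and> hd p = x \<and> last p = y"

definition path_length :: "('a \<Rightarrow> 'a \<Rightarrow> ennreal) \<Rightarrow> 'a list \<Rightarrow> ennreal" where
  "path_length w p = (\<Sum>i<length p - 1. w (p ! i) (p ! Suc i))"

definition delta_w :: "'a set \<Rightarrow> ('a \<Rightarrow> 'a \<Rightarrow> ennreal) \<Rightarrow> 'a \<Rightarrow> 'a \<Rightarrow> ennreal" where
  "delta_w X w x y = (INF p\<in>{p. is_path X x y p}. path_length w p)"

definition is_geodesic :: "'a set \<Rightarrow> ('a \<Rightarrow> 'a \<Rightarrow> ennreal) \<Rightarrow> 'a \<Rightarrow> 'a \<Rightarrow> 'a list \<Rightarrow> bool" where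
  "is_geodesic X w x y p \<longleftrightarrow> is_path X x y p \<and> path_length w p = delta_w X w x y"

definition complete_pmetric :: "'a set \<Rightarrow> ('a \<Rightarrow> 'a \<Rightarrow> ennreal) \<Rightarrow> bool" where
  "complete_pmetric X d \<longleftrightarrow>
     (\<forall>s::nat \<Rightarrow> 'a. (\<forall>n. s n \<in> X) \<and>
        (\<forall>e::real. e > 0 \<longrightarrow> (\<exists>N. \<forall>m\<ge>N. \<forall>n\<ge>N. d (s m) (s n) < ennreal e))
      \<longrightarrow> (\<exists>z\<in>X. \<forall>e::real. e > 0 \<longrightarrow> (\<exists>N. \<forall>n\<ge>N. d (s n) z < ennreal e)))"

end

theory Submission
  imports Defs
begin

(*
  If delta_w x y is infinite, every path from x to y is a geodesic. Otherwise fix a finite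
  R > delta_w x y; it suffices that only finitely many paths starting at x have length < R, since a
  shortest one among those ending at y then realises delta_w x y. These paths form a finitely
  branching tree: a path of length < R can only be extended by one of the finitely many points at
  w-distance < R from its last vertex. If the tree were infinite, Koenig's lemma would give an
  injective sequence whose consecutive weights sum to at most R. Such a sequence is delta_w-Cauchy,
  so by completeness it converges; but essential local finiteness makes every point
  delta_w-isolated, so the sequence would be eventually constant.
*)

lemma path_length_append_le: "path_length w p \<le> path_length w (p @ ys)"
proof -
  have "path_length w p = (\<Sum>i<length p - 1. w ((p @ ys) ! i) ((p @ ys) ! Suc i))"
    unfolding path_length_def by (intro sum.cong) (auto simp: nth_append)
  also have "\<dots> \<le> path_length w (p @ ys)"
    unfolding path_length_def by (intro sum_mono2) auto
  finally show ?thesis .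
qed

lemma path_length_snoc:
  assumes "p \<noteq> []"
  shows "path_length w (p @ [c]) = path_length w p + w (last p) c"
proof -
  define n where "n = length p - 1"
  have len: "length p = Suc n" using assms unfolding n_def by simp
  have "path_length w (p @ [c]) = (\<Sum>i<Suc n. w ((p @ [c]) ! i) ((p @ [c]) ! Suc i))"
    unfolding path_length_def by (simp add: len)
  also have "\<dots> = path_length w p + w (last p) c"
    unfolding path_length_def sum.lessThan_Suc using assms len
    by (simp add: nth_append last_conv_nth)
  finally show ?thesis .
qed

lemma path_length_map_upt:
  "m \<le> n \<Longrightarrow> path_length w (map v [m..<Suc n]) = (\<Sum>i=m..<n. w (v i) (v (Suc i)))"
proof (induction n rule: dec_induct)
  case base
  then show ?case by (simp add: path_length_def)
next
  case (step n)
  have "map v [m..<Suc (Suc n)] = map v [m..<Suc n] @ [v (Suc n)]"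
    using step.hyps by simp
  then show ?case
    using step by (simp add: path_length_snoc last_map del: upt_Suc)
qed

lemma path_length_rev:
  assumes "\<forall>a\<in>set p. \<forall>b\<in>set p. w a b = w b a"
  shows "path_length w (rev p) = path_length w p"
proof -
  let ?L = "length p"
  have "path_length w (rev p) = (\<Sum>i<?L - 1. w (p ! (?L - 1 - Suc i)) (p ! Suc (?L - 1 - Suc i)))"
    unfolding path_length_def
  proof (intro sum.cong)
    fix i assume i: "i \<in> {..<?L - 1}"
    then have "rev p ! i = p ! Suc (?L - 1 - Suc i)" "rev p ! Suc i = p ! (?L - 1 - Suc i)"
      by (auto simp: rev_nth Suc_diff_Suc)
    moreover have "p ! (?L - 1 - Suc i) \<in> set p" "p ! Suc (?L - 1 - Suc i) \<in> set p"
      using i by auto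
    ultimately show "w (rev p ! i) (rev p ! Suc i) = w (p ! (?L - 1 - Suc i)) (p ! Suc (?L - 1 - Suc i))"
      using assms by metis
  qed simp
  also have "\<dots> = path_length w p"
    unfolding path_length_def by (rule sum.nat_diff_reindex)
  finally show ?thesis .
qed

lemma is_path_rev: "is_path X x y p \<Longrightarrow> is_path X y x (rev p)"
  unfolding is_path_def by (auto simp: hd_rev last_rev)

lemma is_path_map_upt:
  assumes "inj v" "\<And>n. v n \<in> X" "m \<le> n"
  shows "is_path X (v m) (v n) (map v [m..<Suc n])"
proof -
  have "distinct (map v [m..<Suc n])"
    using assms(1) by (simp add: distinct_map inj_on_def)
  moreover have "hd (map v [m..<Suc n]) = v m"
    using assms(3) by (simp add: hd_map upt_conv_Cons del: upt_Suc)
  moreover have "last (map v [m..<Suc n]) = v n"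
    using assms(3) by (simp add: last_map del: upt_Suc)
  ultimately show ?thesis
    using assms(2,3) unfolding is_path_def by auto
qed

lemma is_path_exists: "x \<in> X \<Longrightarrow> y \<in> X \<Longrightarrow> \<exists>p. is_path X x y p"
  by (rule exI[of _ "if x = y then [x] else [x, y]"]) (auto simp: is_path_def)

lemma delta_w_le_path_length: "is_path X x y p \<Longrightarrow> delta_w X w x y \<le> path_length w p"
  unfolding delta_w_def by (rule INF_lower) simp

lemma delta_w_sym:
  assumes "weight_on X w"
  shows "delta_w X w x y = delta_w X w y x"
proof -
  have le: "delta_w X w b a \<le> delta_w X w a b" for a b
    unfolding delta_w_def[of X w a b]
  proof (rule INF_greatest)
    fix p assume "p \<in> {p. is_path X a b p}"
    then have p: "is_path X a b p" by simp
    then have "\<forall>u\<in>set p. \<forall>v\<in>set p. w u v = w v u"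
      using assms unfolding weight_on_def is_path_def by blast
    then have "path_length w (rev p) = path_length w p" by (rule path_length_rev)
    then show "delta_w X w b a \<le> path_length w p"
      using delta_w_le_path_length[OF is_path_rev[OF p], of w] by simp
  qed
  show ?thesis by (rule antisym[OF le le])
qed

lemma incoming_weights_bounded_below:
  assumes "weight_on X w" "ess_locally_finite X w" "z \<in> X"
  shows "\<exists>e>0. \<forall>u\<in>X. u \<noteq> z \<longrightarrow> ennreal e \<le> w u z"
proof -
  let ?F = "{u\<in>X. w z u < ennreal 1} - {z}"
  have fin: "finite ?F"
    using assms(2,3) unfolding ess_locally_finite_def by (intro finite_Diff) (meson zero_less_one)
  define m where "m = Min (insert 1 (w z ` ?F))"
  have "m > 0"
    unfolding m_def using fin
  proof (subst Min_gr_iff)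
    show "\<forall>a\<in>insert 1 (w z ` ?F). 0 < a"
      using assms(1,3) by (auto simp: weight_on_def zero_less_iff_neq_zero)
  qed auto
  moreover have "m \<le> 1"
    unfolding m_def using fin by simp
  moreover have "m \<le> w u z" if "u \<in> X" "u \<noteq> z" for u
  proof -
    have "m \<le> w z u"
    proof (cases "u \<in> ?F")
      case True
      then show ?thesis unfolding m_def using fin by simp
    next
      case False
      then have "1 \<le> w z u" using that by auto
      with \<open>m \<le> 1\<close> show ?thesis by simp
    qed
    then show ?thesis using assms(1,3) that unfolding weight_on_def by simp
  qed
  moreover have "m \<noteq> top"
    using \<open>m \<le> 1\<close> by (auto simp: top_unique)
  ultimately show ?thesis
    by (intro exI[of _ "enn2real m"]) (simp add: enn2real_positive_iff less_top)
qed

lemma delta_w_ge_if_incoming_weights_ge: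
  assumes "\<forall>u\<in>X. u \<noteq> z \<longrightarrow> c \<le> w u z" "u \<noteq> z"
  shows "c \<le> delta_w X w u z"
  unfolding delta_w_def
proof (rule INF_greatest)
  fix p assume "p \<in> {p. is_path X u z p}"
  then have p: "p \<noteq> []" "distinct p" "set p \<subseteq> X" "hd p = u" "last p = z"
    unfolding is_path_def by auto
  define q where "q = butlast p"
  have pq: "p = q @ [z]"
    using p(1,5) unfolding q_def by (metis append_butlast_last_id)
  have "q \<noteq> []"
    using p(4) assms(2) pq by auto
  moreover have "last q \<in> X" "last q \<noteq> z"
    using \<open>q \<noteq> []\<close> p(2,3) unfolding pq by auto
  ultimately have "c \<le> w (last q) z"
    using assms(1) by blast
  also have "\<dots> \<le> path_length w q + w (last q) z"
    by simp
  also have "\<dots> = path_length w p"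
    using \<open>q \<noteq> []\<close> by (simp add: pq path_length_snoc)
  finally show "c \<le> path_length w p" .
qed

lemma delta_w_limit_eventually_const:
  assumes "weight_on X w" "ess_locally_finite X w" "z \<in> X" "\<And>n. s n \<in> X"
    and "\<forall>e::real. e > 0 \<longrightarrow> (\<exists>N. \<forall>n\<ge>N. delta_w X w (s n) z < ennreal e)"
  shows "\<exists>N. \<forall>n\<ge>N. s n = z"
proof -
  obtain e where "e > 0" and e: "\<forall>u\<in>X. u \<noteq> z \<longrightarrow> ennreal e \<le> w u z"
    using incoming_weights_bounded_below[OF assms(1-3)] by blast
  obtain N where N: "\<forall>n\<ge>N. delta_w X w (s n) z < ennreal e"
    using assms(5)[rule_format, OF \<open>e > 0\<close>] by (elim exE)
  have "s n = z" if "n \<ge> N" for n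
  proof (rule ccontr)
    assume "s n \<noteq> z"
    then have "ennreal e \<le> delta_w X w (s n) z"
      by (rule delta_w_ge_if_incoming_weights_ge[where w = w, OF e])
    moreover have "delta_w X w (s n) z < ennreal e"
      using N that by blast
    ultimately show False by simp
  qed
  then show ?thesis by blast
qed

lemma delta_w_le_sum_steps:
  assumes "inj v" "\<And>n. v n \<in> X" "m \<le> n"
  shows "delta_w X w (v m) (v n) \<le> (\<Sum>i=m..<n. w (v i) (v (Suc i)))"
proof -
  have "delta_w X w (v m) (v n) \<le> path_length w (map v [m..<Suc n])"
    by (rule delta_w_le_path_length[OF is_path_map_upt[OF assms]])
  also have "\<dots> = (\<Sum>i=m..<n. w (v i) (v (Suc i)))"
    by (rule path_length_map_upt[OF assms(3)])
  finally show ?thesis .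
qed

lemma delta_w_Cauchy_if_bounded_steps:
  assumes "weight_on X w" "inj v" "\<And>n. v n \<in> X"
    and bounded: "\<And>n. (\<Sum>i<n. w (v i) (v (Suc i))) \<le> R" "R < top"
  shows "\<forall>e::real. e > 0 \<longrightarrow> (\<exists>N. \<forall>m\<ge>N. \<forall>n\<ge>N. delta_w X w (v m) (v n) < ennreal e)"
proof (intro allI impI)
  fix e :: real assume "e > 0"
  define a where "a i = enn2real (w (v i) (v (Suc i)))" for i
  have a_nonneg: "0 \<le> a i" for i
    unfolding a_def by simp
  have "w (v i) (v (Suc i)) \<le> (\<Sum>j<Suc i. w (v j) (v (Suc j)))" for i
    by (rule member_le_sum) auto
  then have "w (v i) (v (Suc i)) < top" for i
    using bounded by (meson order.trans order.strict_trans1)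
  then have steps: "w (v i) (v (Suc i)) = ennreal (a i)" for i
    unfolding a_def by simp
  have sums: "(\<Sum>i\<in>I. w (v i) (v (Suc i))) = ennreal (sum a I)" for I
    unfolding steps using a_nonneg by (simp add: sum_ennreal)
  have "sum a {..<n} \<le> enn2real R" for n
  proof -
    have "ennreal (sum a {..<n}) \<le> R"
      using bounded(1)[of n] unfolding sums .
    then show ?thesis
      using enn2real_mono[OF _ bounded(2)] a_nonneg by (metis enn2real_ennreal sum_nonneg)
  qed
  then have "summable a"
    using a_nonneg by (intro summableI_nonneg_bounded)
  then obtain N where N: "\<forall>m\<ge>N. \<forall>n. norm (sum a {m..<n}) < e"
    using \<open>e > 0\<close> unfolding summable_Cauchy by blast
  have close: "delta_w X w (v m) (v n) < ennreal e" if "N \<le> m" "m \<le> n" for m n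
  proof -
    have "delta_w X w (v m) (v n) \<le> ennreal (sum a {m..<n})"
      using delta_w_le_sum_steps[OF assms(2,3) \<open>m \<le> n\<close>, of w] unfolding sums .
    also have "\<dots> < ennreal e"
    proof (rule ennreal_lessI[OF \<open>e > 0\<close>])
      have "\<bar>sum a {m..<n}\<bar> < e"
        using N \<open>N \<le> m\<close> by simp
      then show "sum a {m..<n} < e" by (simp add: abs_less_iff)
    qed
    finally show ?thesis .
  qed
  show "\<exists>N. \<forall>m\<ge>N. \<forall>n\<ge>N. delta_w X w (v m) (v n) < ennreal e"
    using close delta_w_sym[OF assms(1)] by (metis nle_le)
qed

lemma bounded_walk_not_injective:
  assumes "weight_on X w" "ess_locally_finite X w" "complete_pmetric X (delta_w X w)"
    and "\<And>n. v n \<in> X" "\<And>n. (\<Sum>i<n. w (v i) (v (Suc i))) \<le> R" "R < top"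
  shows "\<not> inj v"
proof
  assume "inj v"
  have cauchy: "\<forall>e::real. e > 0 \<longrightarrow> (\<exists>N. \<forall>m\<ge>N. \<forall>n\<ge>N. delta_w X w (v m) (v n) < ennreal e)"
    by (rule delta_w_Cauchy_if_bounded_steps[OF assms(1) \<open>inj v\<close> assms(4-6)])
  from assms(3)[unfolded complete_pmetric_def, rule_format, OF conjI[OF allI[OF assms(4)] cauchy]]
  obtain z where z: "z \<in> X"
    and conv: "\<forall>e::real. e > 0 \<longrightarrow> (\<exists>N. \<forall>n\<ge>N. delta_w X w (v n) z < ennreal e)"
    by (elim bexE)
  obtain N where "\<forall>n\<ge>N. v n = z"
    using delta_w_limit_eventually_const[OF assms(1,2) z assms(4) conv] by (elim exE)
  then have "v N = v (Suc N)" by simp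
  with \<open>inj v\<close> show False by (simp add: inj_eq)
qed

lemma infinite_extensions_extend:
  assumes prefix_closed: "\<And>p ys. p @ ys \<in> T \<Longrightarrow> p \<noteq> [] \<Longrightarrow> p \<in> T"
    and "finite {c. p @ [c] \<in> T}" "infinite {q \<in> T. \<exists>ys. q = p @ ys}"
  shows "\<exists>c. p @ [c] \<in> T \<and> infinite {q \<in> T. \<exists>ys. q = (p @ [c]) @ ys}"
proof (rule ccontr)
  let ?ext = "\<lambda>c. {q \<in> T. \<exists>ys. q = (p @ [c]) @ ys}"
  assume "\<nexists>c. p @ [c] \<in> T \<and> infinite (?ext c)"
  then have "finite (insert p (\<Union>c\<in>{c. p @ [c] \<in> T}. ?ext c))"
    using assms(2) by simp
  moreover have "{q \<in> T. \<exists>ys. q = p @ ys} \<subseteq> insert p (\<Union>c\<in>{c. p @ [c] \<in> T}. ?ext c)"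
  proof
    fix q assume "q \<in> {q \<in> T. \<exists>ys. q = p @ ys}"
    then obtain ys where q: "q \<in> T" "q = p @ ys" by blast
    show "q \<in> insert p (\<Union>c\<in>{c. p @ [c] \<in> T}. ?ext c)"
    proof (cases ys)
      case (Cons c ys')
      then have "p @ [c] \<in> T" using prefix_closed[of "p @ [c]" ys'] q by simp
      then show ?thesis using q Cons by auto
    qed (use q in simp)
  qed
  ultimately have "finite {q \<in> T. \<exists>ys. q = p @ ys}" by (rule finite_subset[rotated])
  with assms(3) show False by contradiction
qed

lemma infinite_tree_has_branch:
  fixes T :: "'a list set"
  assumes "infinite T"
    and rooted: "\<And>p. p \<in> T \<Longrightarrow> \<exists>ys. p = x # ys"
    and prefix_closed: "\<And>p ys. p @ ys \<in> T \<Longrightarrow> p \<noteq> [] \<Longrightarrow> p \<in> T"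
    and finitely_branching: "\<And>p. p \<in> T \<Longrightarrow> finite {c. p @ [c] \<in> T}"
  shows "\<exists>v. \<forall>n. map v [0..<Suc n] \<in> T"
proof -
  define subtree where "subtree p = {q \<in> T. \<exists>ys. q = p @ ys}" for p
  obtain p where "p \<in> T"
    using \<open>infinite T\<close> infinite_imp_nonempty by blast
  then obtain ys where "[x] @ ys \<in> T"
    using rooted by (metis append_Cons append_Nil)
  then have "[x] \<in> T" by (rule prefix_closed) simp
  have "subtree [x] = T"
    using rooted unfolding subtree_def by auto
  define P where "P n p \<longleftrightarrow> p \<in> T \<and> infinite (subtree p) \<and> length p = Suc n" for n p
  define Q where "Q (n :: nat) p q \<longleftrightarrow> (\<exists>c. q = p @ [c])" for n and p q :: "'a list"
  have "\<exists>f. \<forall>n. P n (f n) \<and> Q n (f n) (f (Suc n))"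
  proof (rule dependent_nat_choice)
    show "\<exists>p. P 0 p"
      using \<open>[x] \<in> T\<close> \<open>subtree [x] = T\<close> \<open>infinite T\<close> unfolding P_def by auto
    show "\<exists>q. P (Suc n) q \<and> Q n p q" if p: "P n p" for p n
    proof -
      have "\<exists>c. p @ [c] \<in> T \<and> infinite (subtree (p @ [c]))"
        unfolding subtree_def
      proof (rule infinite_extensions_extend)
        show "\<And>q ys. q @ ys \<in> T \<Longrightarrow> q \<noteq> [] \<Longrightarrow> q \<in> T" by (fact prefix_closed)
        show "finite {c. p @ [c] \<in> T}" using p unfolding P_def by (simp add: finitely_branching)
        show "infinite {q \<in> T. \<exists>ys. q = p @ ys}" using p unfolding P_def subtree_def by simp
      qed
      then show ?thesis
        using p unfolding P_def Q_def by auto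
    qed
  qed
  then obtain f where f: "\<And>n. P n (f n)" "\<And>n. Q n (f n) (f (Suc n))" by blast
  define v where "v n = last (f n)" for n
  have "f n = map v [0..<Suc n]" for n
  proof (induction n)
    case 0
    have "length (f 0) = 1" using f(1)[of 0] unfolding P_def by simp
    then show ?case unfolding v_def by (cases "f 0") auto
  next
    case (Suc n)
    obtain c where c: "f (Suc n) = f n @ [c]" using f(2)[of n] unfolding Q_def by blast
    then have "v (Suc n) = c" unfolding v_def by simp
    with c show ?case using Suc.IH by simp
  qed
  then have "map v [0..<Suc n] \<in> T" for n
    using f(1)[of n] unfolding P_def by simp
  then show ?thesis by blast
qed

definition short_paths_from :: "'a set \<Rightarrow> ('a \<Rightarrow> 'a \<Rightarrow> ennreal) \<Rightarrow> 'a \<Rightarrow> ennreal \<Rightarrow> 'a list set" where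
  "short_paths_from X w x R = {p. \<exists>y. is_path X x y p \<and> path_length w p < R}"

lemma short_paths_from_rooted: "p \<in> short_paths_from X w x R \<Longrightarrow> \<exists>ys. p = x # ys"
  unfolding short_paths_from_def is_path_def by (cases p) auto

lemma short_paths_from_prefix_closed:
  assumes "p @ ys \<in> short_paths_from X w x R" "p \<noteq> []"
  shows "p \<in> short_paths_from X w x R"
proof -
  obtain y where y: "is_path X x y (p @ ys)" "path_length w (p @ ys) < R"
    using assms(1) unfolding short_paths_from_def by blast
  then have "is_path X x (last p) p"
    using assms(2) unfolding is_path_def by auto
  moreover have "path_length w p < R"
    using path_length_append_le y(2) by (rule le_less_trans)
  ultimately show ?thesis unfolding short_paths_from_def by blast
qed

lemma short_paths_from_finitely_branching:
  assumes "ess_locally_finite X w" "R < top" "p \<in> short_paths_from X w x R"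
  shows "finite {c. p @ [c] \<in> short_paths_from X w x R}"
proof (rule finite_subset)
  define r where "r = enn2real R + 1"
  have "R \<le> ennreal r"
    using \<open>R < top\<close> unfolding r_def by (cases R) (auto simp: ennreal_leI)
  have "p \<noteq> []" "last p \<in> X"
    using assms(3) unfolding short_paths_from_def is_path_def by auto
  moreover have "r > 0"
    unfolding r_def by (simp add: add_nonneg_pos)
  ultimately show "finite {c \<in> X. w (last p) c < ennreal r}"
    using assms(1) unfolding ess_locally_finite_def by blast
  show "{c. p @ [c] \<in> short_paths_from X w x R} \<subseteq> {c \<in> X. w (last p) c < ennreal r}"
  proof safe
    fix c assume "p @ [c] \<in> short_paths_from X w x R"
    then obtain y where c: "is_path X x y (p @ [c])" "path_length w (p @ [c]) < R"
      unfolding short_paths_from_def by blast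
    then show "c \<in> X" unfolding is_path_def by auto
    have "w (last p) c \<le> path_length w (p @ [c])"
      using \<open>p \<noteq> []\<close> by (simp add: path_length_snoc)
    also have "\<dots> < ennreal r"
      using c(2) \<open>R \<le> ennreal r\<close> by (rule less_le_trans)
    finally show "w (last p) c < ennreal r" .
  qed
qed

lemma finite_short_paths_from:
  assumes "weight_on X w" "ess_locally_finite X w" "complete_pmetric X (delta_w X w)" "R < top"
  shows "finite (short_paths_from X w x R)"
proof (rule ccontr)
  assume "infinite (short_paths_from X w x R)"
  have "\<exists>v. \<forall>n. map v [0..<Suc n] \<in> short_paths_from X w x R"
  proof (rule infinite_tree_has_branch[where x = x])
    show "infinite (short_paths_from X w x R)" by fact
    show "\<And>p. p \<in> short_paths_from X w x R \<Longrightarrow> \<exists>ys. p = x # ys"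
      by (rule short_paths_from_rooted)
    show "\<And>p ys. p @ ys \<in> short_paths_from X w x R \<Longrightarrow> p \<noteq> [] \<Longrightarrow> p \<in> short_paths_from X w x R"
      by (rule short_paths_from_prefix_closed)
    show "\<And>p. p \<in> short_paths_from X w x R \<Longrightarrow> finite {c. p @ [c] \<in> short_paths_from X w x R}"
      by (rule short_paths_from_finitely_branching[OF assms(2,4)])
  qed
  then obtain v where "\<And>n. map v [0..<Suc n] \<in> short_paths_from X w x R" by blast
  then have branch: "distinct (map v [0..<Suc n]) \<and> set (map v [0..<Suc n]) \<subseteq> X
      \<and> path_length w (map v [0..<Suc n]) < R" for n
    unfolding short_paths_from_def is_path_def by blast
  have "v n \<in> X" for n
  proof -
    have "set (map v [0..<Suc n]) \<subseteq> X" using branch by blast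
    then show ?thesis by (auto simp del: upt_Suc)
  qed
  moreover have "(\<Sum>i<n. w (v i) (v (Suc i))) \<le> R" for n
  proof -
    have "(\<Sum>i<n. w (v i) (v (Suc i))) = path_length w (map v [0..<Suc n])"
      by (simp add: path_length_map_upt atLeast0LessThan del: upt_Suc)
    also have "\<dots> < R" using branch by blast
    finally show ?thesis by simp
  qed
  moreover have "inj v"
  proof (rule injI)
    fix i j assume "v i = v j"
    moreover have "distinct (map v [0..<Suc (max i j)])"
      using branch by blast
    ultimately show "i = j"
      by (auto simp: distinct_map inj_on_def simp del: upt_Suc)
  qed
  ultimately show False
    using bounded_walk_not_injective[OF assms(1-3) _ _ assms(4)] by blast
qed

lemma geodesic_if_finitely_many_short_paths:
  assumes "delta_w X w x y < R" "finite {p. is_path X x y p \<and> path_length w p < R}" (is "finite ?P")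
  shows "\<exists>p. is_geodesic X w x y p"
proof -
  obtain q where "is_path X x y q" "path_length w q < R"
    using assms(1) unfolding delta_w_def INF_less_iff by auto
  then have "?P \<noteq> {}" by blast
  define p where "p = arg_min_on (path_length w) ?P"
  have "p \<in> ?P"
    unfolding p_def using assms(2) \<open>?P \<noteq> {}\<close> by (rule arg_min_if_finite)
  have minimal: "path_length w p \<le> path_length w q" if "is_path X x y q" for q
  proof (cases "q \<in> ?P")
    case True
    then show ?thesis
      unfolding p_def by (rule arg_min_least[OF assms(2) \<open>?P \<noteq> {}\<close>])
  next
    case False
    then have "R \<le> path_length w q" using that by (simp add: not_less)
    moreover have "path_length w p < R" using \<open>p \<in> ?P\<close> by simp
    ultimately show ?thesis by simp
  qed
  have "path_length w p \<le> delta_w X w x y"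
    unfolding delta_w_def by (rule INF_greatest) (simp add: minimal)
  moreover have "delta_w X w x y \<le> path_length w p"
    using \<open>p \<in> ?P\<close> by (simp add: delta_w_le_path_length)
  ultimately have "is_geodesic X w x y p"
    using \<open>p \<in> ?P\<close> unfolding is_geodesic_def by simp
  then show ?thesis ..
qed

theorem lemma2p4:
  fixes X :: "'a set" and w :: "'a \<Rightarrow> 'a \<Rightarrow> ennreal"
  assumes "countable X"
    and "weight_on X w"
    and "ess_locally_finite X w"
    and "complete_pmetric X (delta_w X w)"
    and "x \<in> X" and "y \<in> X"
  shows "\<exists>p. is_geodesic X w x y p"
proof (cases "delta_w X w x y = top")
  case True
  obtain p where p: "is_path X x y p"
    using is_path_exists[OF assms(5,6)] by (elim exE)
  have "path_length w p = top"
    using delta_w_le_path_length[OF p, of w] True by (simp add: top_unique)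
  with p True have "is_geodesic X w x y p"
    unfolding is_geodesic_def by simp
  then show ?thesis ..
next
  case False
  define R where "R = delta_w X w x y + 1"
  have "R < top"
    using False unfolding R_def by (simp add: less_top[symmetric])
  have "delta_w X w x y < R"
    using ennreal_add_left_cancel_less[of "delta_w X w x y" 0 1] False unfolding R_def by simp
  moreover have "finite {p. is_path X x y p \<and> path_length w p < R}"
    by (rule finite_subset[OF _ finite_short_paths_from[OF assms(2-4) \<open>R < top\<close>]])
      (auto simp: short_paths_from_def)
  ultimately show ?thesis
    by (rule geodesic_if_finitely_many_short_paths)
qed

end
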